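(* Consider a Boolean control network $\mathbf{x}(t+1)=L\ltimes\mathbf{u}(t)\ltimes\mathbf{x}(t)$, $\mathbf{y}(t)=H\mathbf{x}(t)$, $t\in\mathbb{Z}_+$, with $L\in\mathcal{L}_{N\times NM}$, $H\in\mathcal{L}_{P\times N}$, and a periodic reference output trajectory of minimal period $T\ge1$ given by $\mathbf{y}_r(s+kT)=\delta_P^{i_s}$ for $s\in[1,T]$, $k\in\mathbb{Z}_+$. The following are equivalent: (i) the periodic trajectory is trackable from every $\mathbf{x}_0\in\mathcal{L}_N$, i.e. for every $\mathbf{x}_0$ there is an infinite input sequence $\{\mathbf{u}(t)\}_{t\in\mathbb{Z}_+}\subset\mathcal{L}_M$ such that the resulting state trajectory with $\mathbf{x}(0)=\mathbf{x}_0$ satisfies $H\mathbf{x}(t)=\mathbf{y}_r(t)$ for all $t\ge1$; (ii) the finite-length trajectory $\{\mathbf{y}_r(t)\}_{t=1}^T$ is trackable from every $\mathbf{x}_0\in\mathcal{L}_N$, i.e. for every $\mathbf{x}_0$ there are inputs $\mathbf{u}(0),\dots,\mathbf{u}(T-1)\in\mathcal{L}_M$ such that $H\mathbf{x}(t)=\mathbf{y}_r(t)$ for all $t\in[1,T]$.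
   Context: $\delta_k^i$ is the $i$-th canonical vector of $\mathbb{R}^k$; $\mathcal{L}_k$ is the set of canonical vectors of $\mathbb{R}^k$; $\mathcal{L}_{k\times q}$ the set of $k\times q$ matrices whose columns are in $\mathcal{L}_k$. $N=2^n$, $M=2^m$, $P=2^p$. Writing $L=[L_1|\cdots|L_M]$ with $L_i\in\mathcal{L}_{N\times N}$, one has $L\ltimes\delta_M^i\ltimes\mathbf{x}=L_i\mathbf{x}$ for $\mathbf{x}\in\mathcal{L}_N$. *)

theory Defs
  imports "Jordan_Normal_Form.Matrix"
begin

text \<open>Canonical vector delta_k^i (1-based index i), as a k x 1 column matrix.\<close>
definition delta :: "nat \<Rightarrow> nat \<Rightarrow> real mat" where
  "delta k i = mat k 1 (\<lambda>(r, c). if r = i - 1 then 1 else 0)"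

definition canon :: "nat \<Rightarrow> real mat set" where
  "canon k = {delta k i | i. 1 \<le> i \<and> i \<le> k}"

definition logical_mat :: "nat \<Rightarrow> nat \<Rightarrow> real mat set" where
  "logical_mat k q = {A. A \<in> carrier_mat k q \<and>
     (\<forall>j<q. mat k 1 (\<lambda>(r, c). A $$ (r, j)) \<in> canon k)}"

definition kron :: "real mat \<Rightarrow> real mat \<Rightarrow> real mat" where
  "kron A B = mat (dim_row A * dim_row B) (dim_col A * dim_col B)
     (\<lambda>(i, j). A $$ (i div dim_row B, j div dim_col B) * B $$ (i mod dim_row B, j mod dim_col B))"

definition stp :: "real mat \<Rightarrow> real mat \<Rightarrow> real mat" (infixl "\<ltimes>" 70) where
  "stp A B = (let a = lcm (dim_col A) (dim_row B) in
     kron A (1\<^sub>m (a div dim_col A)) * kron B (1\<^sub>m (a div dim_row B)))"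

fun traj :: "real mat \<Rightarrow> (nat \<Rightarrow> real mat) \<Rightarrow> real mat \<Rightarrow> nat \<Rightarrow> real mat" where
  "traj L u x0 0 = x0"
| "traj L u x0 (Suc t) = L \<ltimes> u t \<ltimes> traj L u x0 t"

definition yref :: "nat \<Rightarrow> nat \<Rightarrow> (nat \<Rightarrow> nat) \<Rightarrow> nat \<Rightarrow> real mat" where
  "yref P T idx t = delta P (idx ((t - 1) mod T + 1))"

end

theory Submission
  imports Defs
begin

text \<open>Only the direction from finite to periodic tracking needs an argument. A logical
  transition matrix maps canonical states to canonical states (L \<ltimes> \<delta>_M^i \<ltimes> x = L_i x, and every
  column of L_i is canonical), so the state reached after one period is again a legitimate
  initial state. Concatenating the finite tracking inputs chosen from the successive states
  x(0), x(T), x(2T), ... therefore tracks y_r on every period.\<close>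

lemma kron_one_right: "kron A (1\<^sub>m 1) = A"
  by (rule eq_matI) (auto simp: kron_def)

lemma stp_eq_mult:
  assumes "dim_col A = dim_row B" and "0 < dim_row B"
  shows "A \<ltimes> B = A * B"
  using assms by (simp add: stp_def kron_one_right[simplified])

lemma mult_selection_mat:
  assumes "(A :: real mat) \<in> carrier_mat k n" and "\<forall>j<q. f j < n"
  shows "A * mat n q (\<lambda>(i, j). if i = f j then 1 else 0)
    = mat k q (\<lambda>(r, j). A $$ (r, f j))"
proof (rule eq_matI)
  fix r j assume "r < dim_row (mat k q (\<lambda>(r, j). A $$ (r, f j)))"
    and "j < dim_col (mat k q (\<lambda>(r, j). A $$ (r, f j)))"
  then show "(A * mat n q (\<lambda>(i, j). if i = f j then 1 else 0)) $$ (r, j)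
      = mat k q (\<lambda>(r, j). A $$ (r, f j)) $$ (r, j)"
    using assms by (auto simp: scalar_prod_def if_distrib cong: if_cong)
qed (use assms in auto)

lemma delta_eq_selection: "delta k (b + 1) = mat k 1 (\<lambda>(i, j). if i = b then 1 else 0)"
  by (simp add: delta_def)

lemma kron_delta_one:
  assumes "a < M"
  shows "kron (delta M (a + 1)) (1\<^sub>m N)
    = mat (M * N) N (\<lambda>(i, j). if i = a * N + j then 1 else 0)"
proof (rule eq_matI)
  fix i j assume "i < dim_row (mat (M * N) N (\<lambda>(i, j). if i = a * N + j then 1 else 0))"
    and "j < dim_col (mat (M * N) N (\<lambda>(i, j). if i = a * N + j then 1 else 0))"
  then have i: "i < M * N" and j: "j < N" by auto
  then have "i div N < M" by (simp add: less_mult_imp_div_less)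
  moreover have "(i div N = a \<and> i mod N = j) \<longleftrightarrow> i = a * N + j"
    using j by auto
  ultimately show "kron (delta M (a + 1)) (1\<^sub>m N) $$ (i, j)
      = mat (M * N) N (\<lambda>(i, j). if i = a * N + j then 1 else 0) $$ (i, j)"
    using i j by (auto simp: kron_def delta_def)
qed (auto simp: kron_def delta_def)

lemma mult_add_less_mult:
  fixes a j M N :: nat
  assumes "a < M" and "j < N"
  shows "a * N + j < M * N"
proof -
  have "a * N + j < Suc a * N" using assms(2) by simp
  also have "\<dots> \<le> M * N" using assms(1) by (intro mult_le_mono1) simp
  finally show ?thesis .
qed

lemma stp_delta_eq_block:
  assumes "L \<in> carrier_mat N (N * M)" and "0 < N" and "a < M"
  shows "L \<ltimes> delta M (a + 1) = mat N N (\<lambda>(r, j). L $$ (r, a * N + j))"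
proof -
  have "L \<ltimes> delta M (a + 1) = L * kron (delta M (a + 1)) (1\<^sub>m N)"
    using assms by (simp add: stp_def kron_one_right[simplified] delta_def Let_def lcm_proj1_if_dvd)
  also have "\<dots> = mat N N (\<lambda>(r, j). L $$ (r, a * N + j))"
    unfolding kron_delta_one[OF assms(3)]
    by (rule mult_selection_mat) (use assms mult_add_less_mult in auto)
  finally show ?thesis .
qed

lemma stp_delta_delta_eq_col:
  assumes "L \<in> carrier_mat N (N * M)" and "a < M" and "b < N"
  shows "L \<ltimes> delta M (a + 1) \<ltimes> delta N (b + 1) = mat N 1 (\<lambda>(r, c). L $$ (r, a * N + b))"
proof -
  have "0 < N" using assms(3) by simp
  then have "L \<ltimes> delta M (a + 1) \<ltimes> delta N (b + 1)
      = mat N N (\<lambda>(r, j). L $$ (r, a * N + j)) * mat N 1 (\<lambda>(i, j). if i = b then 1 else 0)"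
    unfolding stp_delta_eq_block[OF assms(1) \<open>0 < N\<close> assms(2)]
    unfolding delta_eq_selection
    using \<open>0 < N\<close> by (simp add: stp_eq_mult)
  also have "\<dots> = mat N 1 (\<lambda>(r, c). L $$ (r, a * N + b))"
    using mult_selection_mat[of "mat N N (\<lambda>(r, j). L $$ (r, a * N + j))" N N 1 "\<lambda>_. b"] assms(3)
    by (auto intro!: eq_matI)
  finally show ?thesis .
qed

lemma canon_iff: "x \<in> canon k \<longleftrightarrow> (\<exists>i<k. x = delta k (i + 1))"
proof
  assume "x \<in> canon k"
  then obtain j where "1 \<le> j" "j \<le> k" "x = delta k j" by (auto simp: canon_def)
  then show "\<exists>i<k. x = delta k (i + 1)" by (intro exI[of _ "j - 1"]) auto
qed (auto simp: canon_def)

lemma logical_step_in_canon: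
  assumes L: "L \<in> logical_mat N (N * M)" and "u \<in> canon M" and "x \<in> canon N"
  shows "L \<ltimes> u \<ltimes> x \<in> canon N"
proof -
  obtain a where a: "a < M" "u = delta M (a + 1)"
    using \<open>u \<in> canon M\<close> by (auto simp: canon_iff)
  obtain b where b: "b < N" "x = delta N (b + 1)"
    using \<open>x \<in> canon N\<close> by (auto simp: canon_iff)
  have "L \<in> carrier_mat N (N * M)" using L by (simp add: logical_mat_def)
  then have "L \<ltimes> u \<ltimes> x = mat N 1 (\<lambda>(r, c). L $$ (r, a * N + b))"
    unfolding a(2) b(2) using a(1) b(1) by (rule stp_delta_delta_eq_col)
  moreover have "a * N + b < N * M"
    using mult_add_less_mult[OF a(1) b(1)] by (simp add: mult.commute)
  ultimately show ?thesis
    using L by (simp add: logical_mat_def)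
qed

lemma traj_in_canon:
  assumes "L \<in> logical_mat N (N * M)" and "x0 \<in> canon N" and "\<forall>t<s. u t \<in> canon M"
  shows "traj L u x0 s \<in> canon N"
  using assms(3) by (induction s) (auto simp: assms(2) intro: logical_step_in_canon[OF assms(1)])

lemma traj_add: "traj L u x0 (s + t) = traj L (\<lambda>i. u (s + i)) (traj L u x0 s) t"
  by (induction t) simp_all

lemma traj_cong: "(\<And>i. i < t \<Longrightarrow> u i = v i) \<Longrightarrow> traj L u x0 t = traj L v x0 t"
  by (induction t) simp_all

text \<open>U x is an input block of length T chosen for the initial state x; block_states k is the
  state at time k T of the concatenated input.\<close>

fun block_states :: "real mat \<Rightarrow> nat \<Rightarrow> (real mat \<Rightarrow> nat \<Rightarrow> real mat) \<Rightarrow> real mat \<Rightarrow> nat \<Rightarrow> real mat" where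
  "block_states L T U x0 0 = x0"
| "block_states L T U x0 (Suc k) = (let x = block_states L T U x0 k in traj L (U x) x T)"

definition block_inputs :: "real mat \<Rightarrow> nat \<Rightarrow> (real mat \<Rightarrow> nat \<Rightarrow> real mat) \<Rightarrow> real mat \<Rightarrow> nat \<Rightarrow> real mat" where
  "block_inputs L T U x0 t = U (block_states L T U x0 (t div T)) (t mod T)"

lemma traj_block_inputs:
  assumes "0 < T" and "s \<le> T"
  shows "traj L (block_inputs L T U x0) x0 (k * T + s)
    = traj L (U (block_states L T U x0 k)) (block_states L T U x0 k) s"
proof -
  let ?u = "block_inputs L T U x0" and ?z = "block_states L T U x0"
  have shift: "traj L ?u x0 (k * T + s) = traj L (U (?z k)) (traj L ?u x0 (k * T)) s"
    if "s \<le> T" for k s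
    unfolding traj_add
    by (rule traj_cong) (use that \<open>0 < T\<close> in \<open>simp add: block_inputs_def\<close>)
  have "traj L ?u x0 (k * T) = ?z k" for k
  proof (induction k)
    case (Suc k)
    then show ?case
      using shift[of T k] by (simp add: add.commute Let_def)
  qed simp
  then show ?thesis
    using shift[OF assms(2)] by simp
qed

lemma block_states_in_canon:
  assumes "L \<in> logical_mat N (N * M)" and "x0 \<in> canon N"
    and "\<And>x. x \<in> canon N \<Longrightarrow> \<forall>t<T. U x t \<in> canon M"
  shows "block_states L T U x0 k \<in> canon N"
  by (induction k) (auto simp: Let_def assms(2,3) intro: traj_in_canon[OF assms(1)])

lemma periodic_tracking_of_block_tracking:
  assumes L: "L \<in> logical_mat N (N * M)" and T: "0 < T"
    and y: "\<And>t. 1 \<le> t \<Longrightarrow> y (t + T) = y t"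
    and U: "\<And>x. x \<in> canon N \<Longrightarrow>
      (\<forall>t<T. U x t \<in> canon M) \<and> (\<forall>t\<in>{1..T}. H * traj L (U x) x t = y t)"
    and x0: "x0 \<in> canon N"
  shows "(\<forall>t. block_inputs L T U x0 t \<in> canon M) \<and>
    (\<forall>t\<ge>1. H * traj L (block_inputs L T U x0) x0 t = y t)"
proof (intro conjI allI impI)
  let ?z = "block_states L T U x0"
  have z: "?z k \<in> canon N" for k
    using block_states_in_canon[OF L x0] U by blast
  show "block_inputs L T U x0 t \<in> canon M" for t
    using U[OF z] T by (simp add: block_inputs_def)
  fix t :: nat assume "1 \<le> t"
  define k s where "k = (t - 1) div T" and "s = (t - 1) mod T + 1"
  have t: "t = k * T + s" and s: "s \<in> {1..T}"
    using \<open>1 \<le> t\<close> T by (auto simp: k_def s_def Suc_leI)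
  have y_shift: "y (j * T + s) = y s" for j
  proof (induction j)
    case (Suc j)
    have "y (Suc j * T + s) = y ((j * T + s) + T)" by (simp add: algebra_simps)
    also have "\<dots> = y (j * T + s)" using s y by simp
    finally show ?case using Suc.IH by simp
  qed simp
  have "H * traj L (block_inputs L T U x0) x0 t = H * traj L (U (?z k)) (?z k) s"
    using traj_block_inputs[OF T] s t by simp
  also have "\<dots> = y s"
    using U[OF z] s by blast
  finally show "H * traj L (block_inputs L T U x0) x0 t = y t"
    using y_shift t by simp
qed

lemma yref_periodic:
  assumes "0 < T" and "1 \<le> t"
  shows "yref P T idx (t + T) = yref P T idx t"
proof -
  have "t + T - 1 = (t - 1) + T" using assms(2) by simp
  then show ?thesis by (simp add: yref_def)
qed

theorem proposition1:
  fixes n m p T :: nat and L H :: "real mat" and idx :: "nat \<Rightarrow> nat"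
  assumes "L \<in> logical_mat (2^n) (2^n * 2^m)"
    and "H \<in> logical_mat (2^p) (2^n)"
    and "T \<ge> 1"
    and "\<forall>s\<in>{1..T}. 1 \<le> idx s \<and> idx s \<le> 2^p"
    and "\<forall>T'. 1 \<le> T' \<and> T' < T \<longrightarrow>
           \<not> (\<forall>t\<ge>1. yref (2^p) T idx (t + T') = yref (2^p) T idx t)"
  shows "(\<forall>x0\<in>canon (2^n). \<exists>u. (\<forall>t. u t \<in> canon (2^m)) \<and>
            (\<forall>t\<ge>1. H * traj L u x0 t = yref (2^p) T idx t))
     \<longleftrightarrow> (\<forall>x0\<in>canon (2^n). \<exists>u. (\<forall>t<T. u t \<in> canon (2^m)) \<and>
            (\<forall>t\<in>{1..T}. H * traj L u x0 t = yref (2^p) T idx t))"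
    (is "(\<forall>x0\<in>?X. \<exists>u. ?periodic u x0) \<longleftrightarrow> (\<forall>x0\<in>?X. \<exists>u. ?finite u x0)")
proof
  assume "\<forall>x0\<in>?X. \<exists>u. ?periodic u x0"
  then show "\<forall>x0\<in>?X. \<exists>u. ?finite u x0"
    by fastforce
next
  assume "\<forall>x0\<in>?X. \<exists>u. ?finite u x0"
  then obtain U where U: "\<And>x0. x0 \<in> ?X \<Longrightarrow> ?finite (U x0) x0"
    by metis
  have T: "0 < T" using assms(3) by simp
  have "?periodic (block_inputs L T U x0) x0" if "x0 \<in> ?X" for x0
    using periodic_tracking_of_block_tracking[where y = "yref (2^p) T idx", OF assms(1) T _ U that]
      yref_periodic[OF T] by blast
  then show "\<forall>x0\<in>?X. \<exists>u. ?periodic u x0"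
    by blast
qed

end
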